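(* Let $M^n$ be a hypersurface in $\mathbb{R}^{n+1}$ and $p\in M$. Suppose that at $p$ we have $H>0$ and $\|\mathring{A}\|^2=\varepsilon H^2$ for some $\varepsilon\in\left(0,\frac{1}{n(n-1)}\right)$. Then at $p$ $$nC-(1+n\varepsilon)H\|A\|^2\geq \varepsilon(1+n\varepsilon)\left(1-\sqrt{n(n-1)\varepsilon}\right)H^3,$$ where $C=\kappa_1^3+\dots+\kappa_n^3$.
   Context: $\kappa_1\le\dots\le\kappa_n$ are the principal curvatures at $p$, $H=\sum_i\kappa_i$ is the mean curvature, $\|A\|^2=\sum_i\kappa_i^2$, and $\|\mathring{A}\|^2=\|A\|^2-\frac1nH^2$ is the squared norm of the trace-free second fundamental form $h_{ij}-\frac1nHg_{ij}$. *)

theory Defs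
  imports Complex_Main
begin

text \<open>Pointwise quantities at p, in terms of the principal curvatures
  k 0, ..., k (n-1) (the paper's kappa_1, ..., kappa_n).\<close>

definition meanH :: "nat \<Rightarrow> (nat \<Rightarrow> real) \<Rightarrow> real" where
  "meanH n k = (\<Sum>i<n. k i)"

definition sqnormA :: "nat \<Rightarrow> (nat \<Rightarrow> real) \<Rightarrow> real" where
  "sqnormA n k = (\<Sum>i<n. (k i)^2)"

definition sqnormAo :: "nat \<Rightarrow> (nat \<Rightarrow> real) \<Rightarrow> real" where
  "sqnormAo n k = sqnormA n k - (meanH n k)^2 / real n"

definition cubeC :: "nat \<Rightarrow> (nat \<Rightarrow> real) \<Rightarrow> real" where
  "cubeC n k = (\<Sum>i<n. (k i)^3)"

end

theory Submission
  imports Defs "HOL-Analysis.Convex"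
begin

text \<open>Write \<open>x\<^sub>i = \<kappa>\<^sub>i - H/n\<close> for the eigenvalues of the trace-free second fundamental form.
  Expanding in the \<open>x\<^sub>i\<close> and using \<open>\<Sum> x\<^sub>i = 0\<close>, \<open>\<Sum> x\<^sub>i\<^sup>2 = \<epsilon>H\<^sup>2\<close>, the left-hand side equals
  \<open>\<epsilon>(1 - n\<epsilon>)H\<^sup>3 + n \<Sum> x\<^sub>i\<^sup>3\<close>. Okumura's inequality bounds the cubic sum from below by
  \<open>-(n-2)/\<surd>(n(n-1)) \<cdot> (\<Sum> x\<^sub>i\<^sup>2)\<^sup>3\<^sup>/\<^sup>2\<close>, and what remains is the one-variable estimate
  in \<open>t = \<surd>\<epsilon>\<close>, whose defect is the square \<open>n t\<^sup>3H\<^sup>3(1 - \<surd>(n(n-1)) t)\<^sup>2/\<surd>(n(n-1))\<close>.\<close>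

lemma cube_ge_quadratic_minorant:
  fixes x u m :: real
  assumes "x \<ge> -m"
  shows "x^3 \<ge> (2*u - m) * x^2 + u * (2*m - u) * x - u^2 * m"
proof -
  have "x^3 - ((2*u - m) * x^2 + u * (2*m - u) * x - u^2 * m) = (x - u)^2 * (x + m)"
    by (simp add: algebra_simps power2_eq_square power3_eq_cube)
  moreover have "(x - u)^2 * (x + m) \<ge> 0" using assms by simp
  ultimately show ?thesis by linarith
qed

lemma square_le_sum_squares_of_sum_eq_0:
  fixes x :: "nat \<Rightarrow> real"
  assumes "(\<Sum>j<n. x j) = 0" and "i < n"
  shows "real n * (x i)^2 \<le> (real n - 1) * (\<Sum>j<n. (x j)^2)"
proof -
  let ?J = "{..<n} - {i}"
  have "x i = - (\<Sum>j\<in>?J. x j)"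
    using assms by (simp add: sum_diff1)
  hence "(x i)^2 \<le> (\<Sum>j\<in>?J. (x j)^2) * card ?J"
    using sum_squared_le_sum_of_squares[of x ?J] by simp
  also have "\<dots> = ((\<Sum>j<n. (x j)^2) - (x i)^2) * (real n - 1)"
    using assms(2) by (simp add: sum_diff1)
  finally show ?thesis by (simp add: algebra_simps)
qed

theorem okumura_inequality:
  fixes x :: "nat \<Rightarrow> real"
  assumes "n \<ge> 2" and "(\<Sum>i<n. x i) = 0"
  shows "(\<Sum>i<n. (x i)^3)
         \<ge> - ((real n - 2) / sqrt (real n * (real n - 1)) * sqrt (\<Sum>i<n. (x i)^2) ^ 3)"
proof -
  define S where "S = (\<Sum>i<n. (x i)^2)"
  define a where "a = sqrt (real n * (real n - 1))"
  define u where "u = sqrt S / a"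
  define m where "m = (real n - 1) * u"
  have n2: "real n \<ge> 2" using assms(1) by simp
  have a_pos: "a > 0" and a2: "a^2 = real n * (real n - 1)"
    using n2 by (simp_all add: a_def)
  have S_nonneg: "S \<ge> 0" by (simp add: S_def sum_nonneg)
  have u_nonneg: "u \<ge> 0" using a_pos S_nonneg by (simp add: u_def)
  have S_eq: "S = real n * (real n - 1) * u^2"
    using a_pos S_nonneg by (simp add: u_def power_divide flip: a2)
  have x_ge: "x i \<ge> -m" if "i < n" for i
  proof -
    have "real n * (x i)^2 \<le> (real n - 1) * S"
      using square_le_sum_squares_of_sum_eq_0[OF assms(2) that] by (simp add: S_def)
    also have "\<dots> = real n * m^2"
      by (simp add: S_eq m_def power2_eq_square algebra_simps)
    finally have "real n * (x i)^2 \<le> real n * m^2" .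
    hence "(x i)^2 \<le> m^2" using n2 by simp
    moreover have "m \<ge> 0" using n2 u_nonneg by (simp add: m_def)
    ultimately show ?thesis using abs_le_square_iff[of "x i" m] by simp
  qed
  have "real n * (real n - 1) * u^3 = a^2 * (sqrt S ^ 3 / (a^2 * a))"
    by (simp only: flip: a2) (simp add: u_def power_divide power3_eq_cube power2_eq_square)
  also have "\<dots> = sqrt S ^ 3 / a"
    using a_pos by simp
  finally have u_cube: "real n * (real n - 1) * u^3 = sqrt S ^ 3 / a" .
  have "- ((real n - 2) / a * sqrt S ^ 3) = - ((real n - 2) * (real n * (real n - 1) * u^3))"
    by (simp add: u_cube)
  also have "\<dots> = (2*u - m) * S - real n * u^2 * m"
    by (simp add: S_eq m_def power2_eq_square power3_eq_cube algebra_simps)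
  also have "\<dots> = (2*u - m) * S + u * (2*m - u) * (\<Sum>i<n. x i) - real n * (u^2 * m)"
    using assms(2) by simp
  also have "\<dots> = (\<Sum>i<n. (2*u - m) * (x i)^2 + u * (2*m - u) * x i - u^2 * m)"
    unfolding S_def by (simp add: sum.distrib sum_subtractf sum_distrib_left)
  also have "\<dots> \<le> (\<Sum>i<n. (x i)^3)"
    by (intro sum_mono cube_ge_quadratic_minorant x_ge) simp
  finally show ?thesis unfolding S_def a_def .
qed

definition trace_free :: "nat \<Rightarrow> (nat \<Rightarrow> real) \<Rightarrow> nat \<Rightarrow> real" where
  "trace_free n k i = k i - meanH n k / real n"

lemma sum_trace_free:
  assumes "n > 0"
  shows "(\<Sum>i<n. trace_free n k i) = 0"
  using assms by (simp add: trace_free_def sum_subtractf meanH_def)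

lemma square_shift: "y^2 = (y - c)^2 + 2 * c * (y - c) + c^2" for y c :: real
  by (simp add: power2_eq_square algebra_simps)

lemma cube_shift: "y^3 = (y - c)^3 + 3 * c * (y - c)^2 + 3 * c^2 * (y - c) + c^3" for y c :: real
  by (simp add: power2_eq_square power3_eq_cube algebra_simps)

lemma sqnormA_eq_trace_free:
  assumes "n > 0"
  shows "sqnormA n k = (\<Sum>i<n. (trace_free n k i)^2) + (meanH n k)^2 / real n"
proof -
  define c where "c = meanH n k / real n"
  have "sqnormA n k = (\<Sum>i<n. (trace_free n k i)^2 + 2 * c * trace_free n k i + c^2)"
    unfolding sqnormA_def trace_free_def c_def by (rule sum.cong[OF refl square_shift])
  also have "\<dots> = (\<Sum>i<n. (trace_free n k i)^2) + real n * c^2"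
    using sum_trace_free[OF assms] by (simp add: sum.distrib flip: sum_distrib_left)
  finally show ?thesis using assms by (simp add: c_def power2_eq_square)
qed

lemma sqnormAo_eq_trace_free:
  assumes "n > 0"
  shows "sqnormAo n k = (\<Sum>i<n. (trace_free n k i)^2)"
  using sqnormA_eq_trace_free[OF assms] by (simp add: sqnormAo_def)

lemma cubeC_eq_trace_free:
  assumes "n > 0"
  shows "real n * cubeC n k
         = real n * (\<Sum>i<n. (trace_free n k i)^3) + 3 * meanH n k * sqnormAo n k + (meanH n k)^3 / real n"
proof -
  define c where "c = meanH n k / real n"
  have "cubeC n k = (\<Sum>i<n. (trace_free n k i)^3 + 3 * c * (trace_free n k i)^2
                             + 3 * c^2 * trace_free n k i + c^3)"
    unfolding cubeC_def trace_free_def c_def by (rule sum.cong[OF refl cube_shift])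
  also have "\<dots> = (\<Sum>i<n. (trace_free n k i)^3) + 3 * c * sqnormAo n k + real n * c^3"
    using sum_trace_free[OF assms] sqnormAo_eq_trace_free[OF assms]
    by (simp add: sum.distrib flip: sum_distrib_left)
  finally show ?thesis using assms by (simp add: c_def power3_eq_cube algebra_simps)
qed

lemma cubic_pinching_estimate:
  fixes N \<epsilon> H :: real
  assumes "N > 1" and "\<epsilon> \<ge> 0" and "H \<ge> 0"
  shows "\<epsilon> * (1 - N * \<epsilon>) * H^3 - N * ((N - 2) / sqrt (N * (N - 1)) * sqrt (\<epsilon> * H^2) ^ 3)
         \<ge> \<epsilon> * (1 + N * \<epsilon>) * (1 - sqrt (N * (N - 1) * \<epsilon>)) * H^3"
proof -
  define a where "a = sqrt (N * (N - 1))"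
  define t where "t = sqrt \<epsilon>"
  have a_pos: "a > 0" and a2: "a^2 = N * (N - 1)"
    using assms(1) by (simp_all add: a_def)
  have t2: "t^2 = \<epsilon>" and t_nonneg: "t \<ge> 0"
    using assms(2) by (simp_all add: t_def)
  have sqrt_eq: "sqrt (\<epsilon> * H^2) = t * H" "sqrt (N * (N - 1) * \<epsilon>) = a * t"
    using assms(3) by (simp_all add: a_def t_def real_sqrt_mult)
  have "(t^2 * (1 - N * t^2) * H^3 - N * (N - 2) / a * (t * H)^3
         - t^2 * (1 + N * t^2) * (1 - a * t) * H^3) * a
        = N * t^3 * H^3 * (1 - a * t)^2 + t^3 * H^3 * (a^2 - N * (N - 1))"
    using a_pos by (simp add: field_simps power2_eq_square power3_eq_cube)
  also have "\<dots> \<ge> 0"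
    using assms t_nonneg by (simp add: a2)
  finally have "0 \<le> t^2 * (1 - N * t^2) * H^3 - N * (N - 2) / a * (t * H)^3
                     - t^2 * (1 + N * t^2) * (1 - a * t) * H^3"
    using a_pos by (simp add: zero_le_mult_iff)
  then show ?thesis
    unfolding sqrt_eq unfolding a_def[symmetric] t2[symmetric] by simp
qed

theorem lemma3:
  fixes n :: nat and k :: "nat \<Rightarrow> real" and \<epsilon> :: real
  assumes "n \<ge> 2"
    and "\<forall>i j. i \<le> j \<and> j < n \<longrightarrow> k i \<le> k j"
    and "meanH n k > 0"
    and "sqnormAo n k = \<epsilon> * (meanH n k)^2"
    and "0 < \<epsilon>" and "\<epsilon> < 1 / (real n * (real n - 1))"
  shows "real n * cubeC n k - (1 + real n * \<epsilon>) * meanH n k * sqnormA n k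
         \<ge> \<epsilon> * (1 + real n * \<epsilon>) * (1 - sqrt (real n * (real n - 1) * \<epsilon>)) * (meanH n k)^3"
proof -
  define H where "H = meanH n k"
  define X3 where "X3 = (\<Sum>i<n. (trace_free n k i)^3)"
  define B where "B = (real n - 2) / sqrt (real n * (real n - 1)) * sqrt (\<epsilon> * H^2) ^ 3"
  have n_pos: "n > 0" using assms(1) by simp
  have "- B \<le> X3"
    using okumura_inequality[OF assms(1) sum_trace_free[OF n_pos, of k]]
      sqnormAo_eq_trace_free[OF n_pos, of k] assms(4) by (simp add: X3_def H_def B_def)
  then have okumura: "- (real n * B) \<le> real n * X3"
    using mult_left_mono[of "- B" X3 "real n"] by simp
  have sqnormA_eq: "sqnormA n k = \<epsilon> * H^2 + H^2 / real n"
    using assms(4) by (simp add: sqnormAo_def H_def)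
  have cubeC_eq: "real n * cubeC n k = real n * X3 + 3 * H * (\<epsilon> * H^2) + H^3 / real n"
    using cubeC_eq_trace_free[OF n_pos, of k] assms(4) by (simp add: X3_def H_def)
  have "\<epsilon> * (1 + real n * \<epsilon>) * (1 - sqrt (real n * (real n - 1) * \<epsilon>)) * H^3
        \<le> \<epsilon> * (1 - real n * \<epsilon>) * H^3 - real n * B"
    using cubic_pinching_estimate[of "real n" \<epsilon> H] assms(1,3,5) by (simp add: H_def B_def)
  also have "\<dots> \<le> \<epsilon> * (1 - real n * \<epsilon>) * H^3 + real n * X3"
    using okumura by linarith
  also have "\<dots> = real n * cubeC n k - (1 + real n * \<epsilon>) * H * sqnormA n k"
    unfolding sqnormA_eq cubeC_eq using n_pos by (simp add: field_simps power2_eq_square power3_eq_cube)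
  finally show ?thesis by (simp add: H_def)
qed

end
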